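(* For the Curie–Weiss model and every $0\le\beta<1$, $$\log Z_N(\beta)=N\log 2+G_N(\beta),$$ where $G_N(\beta)$ is nondecreasing in $N$ and $$\lim_{N\to\infty}G_N(\beta)=\sum_{k\ge 2}\frac{\beta^k}{2k}=-\frac{\beta}{2}-\log\sqrt{1-\beta}.$$
   Context: Curie–Weiss model: for $\sigma\in\{-1,1\}^N$, $\mathcal H_N(\sigma)=-\frac1N\sum_{1\le i<j\le N}\sigma_i\sigma_j=-\frac{1}{2N}\mathcal M_N(\sigma)^2+\frac12$, where $\mathcal M_N(\sigma)=\sum_{i=1}^N\sigma_i$. The partition function is $Z_N(\beta)=\sum_{\sigma\in\{-1,1\}^N}e^{-\beta\mathcal H_N(\sigma)}$, and $G_N(\beta):=\log Z_N(\beta)-N\log 2$. *)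

theory Defs
  imports "HOL-Analysis.Analysis"
begin

definition configs :: "nat \<Rightarrow> (nat \<Rightarrow> real) set" where
  "configs N = ({1..N} \<rightarrow>\<^sub>E {-1, 1})"

definition cw_H :: "nat \<Rightarrow> (nat \<Rightarrow> real) \<Rightarrow> real" where
  "cw_H N \<sigma> = - (1 / real N) * (\<Sum>(i,j)\<in>{(i,j). 1 \<le> i \<and> i < j \<and> j \<le> N}. \<sigma> i * \<sigma> j)"

definition cw_Z :: "nat \<Rightarrow> real \<Rightarrow> real" where
  "cw_Z N \<beta> = (\<Sum>\<sigma>\<in>configs N. exp (- \<beta> * cw_H N \<sigma>))"

definition cw_G :: "nat \<Rightarrow> real \<Rightarrow> real" where
  "cw_G N \<beta> = ln (cw_Z N \<beta>) - real N * ln 2"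

end

theory Submission
  imports Defs "HOL-Probability.Distributions" "HOL-Real_Asymp.Real_Asymp"
begin

text \<open>
  With \<open>M = \<Sum>\<^sub>i \<sigma>\<^sub>i\<close> the Hamiltonian is \<open>1/2 - M\<^sup>2/(2N)\<close>. Writing the Boltzmann weight
  \<open>exp (\<beta> M\<^sup>2/(2N))\<close> as the moment generating function \<open>E exp (\<surd>(\<beta>/N) M g)\<close> of a standard
  Gaussian \<open>g\<close> (Hubbard--Stratonovich) factorises the sum over spins and gives
  \<open>Z\<^sub>N(\<beta>) = exp (-\<beta>/2) 2\<^sup>N E exp (q\<^sub>N (\<surd>\<beta> g))\<close> with \<open>q\<^sub>N(t) = N ln cosh (t/\<surd>N)\<close>.
  Since \<open>ln (cosh s) / s\<^sup>2\<close> decreases on \<open>s > 0\<close> to the limit \<open>1/2\<close> at \<open>0\<close>, \<open>q\<^sub>N(t)\<close>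
  increases in \<open>N\<close> to \<open>t\<^sup>2/2\<close>. Hence \<open>G\<^sub>N(\<beta>) = -\<beta>/2 + ln E exp (q\<^sub>N (\<surd>\<beta> g))\<close> is
  nondecreasing and, by dominated convergence, tends to
  \<open>-\<beta>/2 + ln E exp (\<beta> g\<^sup>2/2) = -\<beta>/2 - ln \<surd>(1 - \<beta>)\<close>, which is the sum of the series
  because \<open>-ln (1 - \<beta>) = \<Sum>\<^sub>k\<^sub>\<ge>\<^sub>1 \<beta>\<^sup>k/k\<close>.
\<close>

lemma x_le_sinh:
  fixes x :: real
  assumes "0 \<le> x"
  shows "x \<le> sinh x"
  using real_le_x_sinh[OF assms] by (simp add: sinh_def exp_minus)

lemma mult_sinh_div_cosh_le_2_ln_cosh:
  fixes t :: real
  assumes "0 \<le> t"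
  shows "t * sinh t / cosh t \<le> 2 * ln (cosh t)"
proof -
  let ?f = "\<lambda>x::real. 2 * ln (cosh x) - x * sinh x / cosh x"
  have "?f 0 \<le> ?f t"
  proof (rule DERIV_nonneg_imp_nondecreasing[OF assms])
    fix x :: real
    assume "0 \<le> x"
    have "cosh x * cosh x = 1 + sinh x * sinh x"
      using cosh_square_eq[of x] by (simp add: power2_eq_square)
    then have "(?f has_real_derivative (sinh x * cosh x - x) / (cosh x)^2) (at x)"
      by (auto intro!: derivative_eq_intros simp: field_simps power2_eq_square)
    moreover have "x \<le> sinh x * cosh x"
      using x_le_sinh[of "2 * x"] \<open>0 \<le> x\<close> by (simp add: sinh_double)
    ultimately show "\<exists>y. (?f has_real_derivative y) (at x) \<and> 0 \<le> y"
      by auto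
  qed
  then show ?thesis by simp
qed

lemma ln_cosh_div_square_antimono:
  fixes a b :: real
  assumes "0 < a" "a \<le> b"
  shows "ln (cosh b) / b^2 \<le> ln (cosh a) / a^2"
proof (rule DERIV_nonpos_imp_nonincreasing[OF assms(2)])
  fix x :: real
  assume "a \<le> x"
  with assms have "0 < x" by simp
  have "((\<lambda>x. ln (cosh x) / x^2) has_real_derivative
          (x * sinh x / cosh x - 2 * ln (cosh x)) / x^3) (at x)"
    using \<open>0 < x\<close> by (auto intro!: derivative_eq_intros simp: field_simps power2_eq_square power3_eq_cube)
  moreover have "(x * sinh x / cosh x - 2 * ln (cosh x)) / x^3 \<le> 0"
    using mult_sinh_div_cosh_le_2_ln_cosh[of x] \<open>0 < x\<close> by (intro divide_nonpos_pos) auto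
  ultimately show "\<exists>y. ((\<lambda>x. ln (cosh x) / x^2) has_real_derivative y) (at x) \<and> y \<le> 0"
    by blast
qed

lemma ln_cosh_div_square_tendsto: "((\<lambda>t::real. ln (cosh t) / t^2) \<longlongrightarrow> 1/2) (at_right 0)"
  unfolding cosh_field_def by real_asymp

definition scaled_ln_cosh :: "nat \<Rightarrow> real \<Rightarrow> real" where
  "scaled_ln_cosh n t = real n * ln (cosh (t / sqrt (real n)))"

lemma scaled_ln_cosh_eq:
  assumes "t \<noteq> 0" "0 < n"
  shows "scaled_ln_cosh n t = t^2 * (ln (cosh (\<bar>t\<bar> / sqrt n)) / (\<bar>t\<bar> / sqrt n)^2)"
proof -
  have "cosh (\<bar>t\<bar> / sqrt n) = cosh (t / sqrt n)"
    using cosh_real_abs[of "t / sqrt n"] by (simp add: abs_divide)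
  with assms show ?thesis
    by (simp add: scaled_ln_cosh_def power_divide)
qed

lemma incseq_scaled_ln_cosh: "incseq (\<lambda>n. scaled_ln_cosh n t)"
proof (rule incseq_SucI)
  fix n :: nat
  show "scaled_ln_cosh n t \<le> scaled_ln_cosh (Suc n) t"
  proof (cases "n = 0 \<or> t = 0")
    case True
    then show ?thesis by (auto simp: scaled_ln_cosh_def cosh_real_ge_1)
  next
    case False
    have "ln (cosh (\<bar>t\<bar> / sqrt n)) / (\<bar>t\<bar> / sqrt n)^2
          \<le> ln (cosh (\<bar>t\<bar> / sqrt (Suc n))) / (\<bar>t\<bar> / sqrt (Suc n))^2"
      using False by (intro ln_cosh_div_square_antimono divide_left_mono) auto
    from mult_left_mono[OF this, of "t^2"] False show ?thesis
      by (simp add: scaled_ln_cosh_eq)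
  qed
qed

lemma scaled_ln_cosh_tendsto: "(\<lambda>n. scaled_ln_cosh n t) \<longlonglongrightarrow> t^2 / 2"
proof (cases "t = 0")
  case True
  then show ?thesis by (simp add: scaled_ln_cosh_def)
next
  case False
  have "filterlim (\<lambda>n. \<bar>t\<bar> / sqrt (real n)) (at_right 0) sequentially"
    using False by real_asymp
  from filterlim_compose[OF ln_cosh_div_square_tendsto this]
  have "(\<lambda>n. t^2 * (ln (cosh (\<bar>t\<bar> / sqrt n)) / (\<bar>t\<bar> / sqrt n)^2)) \<longlonglongrightarrow> t^2 * (1/2)"
    by (intro tendsto_mult_left)
  moreover have "\<forall>\<^sub>F n in sequentially.
      t^2 * (ln (cosh (\<bar>t\<bar> / sqrt n)) / (\<bar>t\<bar> / sqrt n)^2) = scaled_ln_cosh n t"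
    using eventually_gt_at_top[of 0] by eventually_elim (simp add: scaled_ln_cosh_eq[OF False])
  ultimately show ?thesis
    using Lim_transform_eventually by fastforce
qed

lemma scaled_ln_cosh_le: "scaled_ln_cosh n t \<le> t^2 / 2"
  by (rule incseq_le[OF incseq_scaled_ln_cosh scaled_ln_cosh_tendsto])

lemma cosh_power_eq_exp_scaled_ln_cosh: "cosh (t / sqrt (real n)) ^ n = exp (scaled_ln_cosh n t)"
  by (simp add: scaled_ln_cosh_def exp_of_nat_mult)

lemma gaussian_mgf:
  "integrable lborel (\<lambda>x. exp (a * x) * std_normal_density x)"
  "(\<integral>x. exp (a * x) * std_normal_density x \<partial>lborel) = exp (a^2 / 2)"
proof -
  have "exp (a * x) * std_normal_density x = exp (a^2 / 2) * normal_density a 1 x" for x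
  proof -
    have "a * x - x^2 / 2 = a^2 / 2 - (x - a)^2 / 2"
      by (simp add: power2_eq_square field_simps)
    then show ?thesis
      unfolding std_normal_density_def normal_density_def by (simp flip: exp_add)
  qed
  then show "integrable lborel (\<lambda>x. exp (a * x) * std_normal_density x)"
    "(\<integral>x. exp (a * x) * std_normal_density x \<partial>lborel) = exp (a^2 / 2)"
    by simp_all
qed

lemma gaussian_exp_square:
  assumes "c^2 < 1"
  shows "integrable lborel (\<lambda>x. exp ((c * x)^2 / 2) * std_normal_density x)"
    "(\<integral>x. exp ((c * x)^2 / 2) * std_normal_density x \<partial>lborel) = 1 / sqrt (1 - c^2)"
proof -
  define s where "s = 1 / sqrt (1 - c^2)"
  have "0 < s"
    using assms by (simp add: s_def)
  have "exp ((c * x)^2 / 2) * std_normal_density x = s * normal_density 0 s x" for x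
  proof -
    have exponent: "(c * x)^2 / 2 + -(x^2) / 2 = -(x^2) / (2 * s^2)"
      using assms by (simp add: s_def power_divide power_mult_distrib field_simps)
    have "exp ((c * x)^2 / 2) * std_normal_density x
        = 1 / sqrt (2 * pi) * (exp ((c * x)^2 / 2) * exp (-(x^2) / 2))"
      by (simp add: std_normal_density_def normal_density_def)
    also have "\<dots> = 1 / sqrt (2 * pi) * exp (-(x^2) / (2 * s^2))"
      by (simp only: exp_add[symmetric] exponent)
    also have "\<dots> = s * normal_density 0 s x"
      using \<open>0 < s\<close> by (simp add: normal_density_def real_sqrt_mult)
    finally show ?thesis .
  qed
  then show "integrable lborel (\<lambda>x. exp ((c * x)^2 / 2) * std_normal_density x)"
    "(\<integral>x. exp ((c * x)^2 / 2) * std_normal_density x \<partial>lborel) = 1 / sqrt (1 - c^2)"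
    using \<open>0 < s\<close> by (simp_all add: s_def)
qed

lemma sum_ordered_pairs_eq:
  fixes \<sigma> :: "nat \<Rightarrow> real"
  shows "2 * (\<Sum>(i,j)\<in>{(i,j). 1 \<le> i \<and> i < j \<and> j \<le> N}. \<sigma> i * \<sigma> j)
    = (\<Sum>i=1..N. \<sigma> i)^2 - (\<Sum>i=1..N. \<sigma> i ^ 2)"
proof (induction N)
  case 0
  have "{(i,j). 1 \<le> i \<and> i < j \<and> j \<le> (0::nat)} = {}"
    by auto
  then show ?case
    by (simp only:) simp
next
  case (Suc N)
  let ?P = "\<lambda>N. {(i,j). 1 \<le> i \<and> i < j \<and> j \<le> (N::nat)}"
  have "?P (Suc N) = ?P N \<union> (\<lambda>i. (i, Suc N)) ` {1..N}"
    by auto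
  moreover have "finite (?P N)"
    by (rule finite_subset[of _ "{1..N} \<times> {1..N}"]) auto
  moreover have "?P N \<inter> (\<lambda>i. (i, Suc N)) ` {1..N} = {}"
    by auto
  moreover have "inj_on (\<lambda>i. (i, Suc N)) {1..N}"
    by (auto simp: inj_on_def)
  ultimately have "(\<Sum>(i,j)\<in>?P (Suc N). \<sigma> i * \<sigma> j)
      = (\<Sum>(i,j)\<in>?P N. \<sigma> i * \<sigma> j) + (\<Sum>i=1..N. \<sigma> i) * \<sigma> (Suc N)"
    by (simp add: sum.union_disjoint sum.reindex sum_distrib_right)
  with Suc.IH show ?case
    by (simp add: power2_eq_square algebra_simps)
qed

lemma cw_H_eq_magnetization:
  assumes "\<sigma> \<in> configs N" "0 < N"
  shows "cw_H N \<sigma> = 1/2 - (\<Sum>i=1..N. \<sigma> i)^2 / (2 * real N)"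
proof -
  have "\<sigma> i ^ 2 = 1" if "i \<in> {1..N}" for i
  proof -
    have "\<sigma> i \<in> {-1, 1}"
      using assms(1) that unfolding configs_def by blast
    then show ?thesis by auto
  qed
  then have "(\<Sum>i=1..N. \<sigma> i ^ 2) = (\<Sum>i=1..N. 1)"
    by (intro sum.cong) auto
  then show ?thesis
    using sum_ordered_pairs_eq[of \<sigma> N] assms(2) by (simp add: cw_H_def field_simps)
qed

lemma sum_configs_exp_magnetization:
  "(\<Sum>\<sigma>\<in>configs N. exp (a * (\<Sum>i=1..N. \<sigma> i))) = (2 * cosh a) ^ N"
proof -
  have "(\<Sum>\<sigma>\<in>configs N. exp (a * (\<Sum>i=1..N. \<sigma> i)))
      = (\<Sum>\<sigma>\<in>configs N. \<Prod>i=1..N. exp (a * \<sigma> i))"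
    by (simp add: exp_sum sum_distrib_left)
  also have "\<dots> = (\<Prod>i=1..N. \<Sum>s\<in>{-1,1}. exp (a * s))"
    unfolding configs_def by (rule prod_sum_PiE[symmetric]) auto
  also have "(\<Sum>s\<in>{-1,1}. exp (a * s)) = 2 * cosh a"
    by (simp add: cosh_def)
  finally show ?thesis
    by simp
qed

lemma cw_Z_Hubbard_Stratonovich:
  assumes "0 \<le> \<beta>" "0 < N"
  shows "cw_Z N \<beta> = exp (- \<beta> / 2) * 2 ^ N *
    (\<integral>x. cosh (sqrt \<beta> * x / sqrt N) ^ N * std_normal_density x \<partial>lborel)"
proof -
  define c where "c = sqrt \<beta> / sqrt N"
  define g where "g = (\<lambda>\<sigma> x. exp (c * (\<Sum>i=1..N. \<sigma> i) * x) * std_normal_density x)"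
  have weight: "exp (- \<beta> * cw_H N \<sigma>) = exp (- \<beta> / 2) * (\<integral>x. g \<sigma> x \<partial>lborel)"
    if "\<sigma> \<in> configs N" for \<sigma>
  proof -
    have "- \<beta> * cw_H N \<sigma> = - \<beta> / 2 + (c * (\<Sum>i=1..N. \<sigma> i))^2 / 2"
      using assms by (simp add: cw_H_eq_magnetization[OF that] c_def power_mult_distrib
          power_divide field_simps)
    then show ?thesis
      by (simp add: g_def gaussian_mgf mult_exp_exp)
  qed
  have "cw_Z N \<beta> = exp (- \<beta> / 2) * (\<Sum>\<sigma>\<in>configs N. \<integral>x. g \<sigma> x \<partial>lborel)"
    unfolding cw_Z_def sum_distrib_left by (rule sum.cong[OF refl weight])
  also have "\<dots> = exp (- \<beta> / 2) * (\<integral>x. (\<Sum>\<sigma>\<in>configs N. g \<sigma> x) \<partial>lborel)"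
    by (simp add: g_def gaussian_mgf)
  also have "(\<lambda>x. \<Sum>\<sigma>\<in>configs N. g \<sigma> x)
      = (\<lambda>x. 2 ^ N * (cosh (sqrt \<beta> * x / sqrt N) ^ N * std_normal_density x))"
  proof
    fix x
    have "(\<Sum>\<sigma>\<in>configs N. g \<sigma> x)
        = (\<Sum>\<sigma>\<in>configs N. exp ((c * x) * (\<Sum>i=1..N. \<sigma> i))) * std_normal_density x"
      by (simp add: g_def sum_distrib_left sum_distrib_right mult_ac)
    also have "\<dots> = (2 * cosh (c * x)) ^ N * std_normal_density x"
      by (simp only: sum_configs_exp_magnetization)
    also have "c * x = sqrt \<beta> * x / sqrt N"
      by (simp add: c_def)
    finally show "(\<Sum>\<sigma>\<in>configs N. g \<sigma> x)
        = 2 ^ N * (cosh (sqrt \<beta> * x / sqrt N) ^ N * std_normal_density x)"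
      by (simp add: power_mult_distrib)
  qed
  finally show ?thesis
    by simp
qed

lemma borel_measurable_scaled_ln_cosh_integrand:
  "(\<lambda>x. exp (scaled_ln_cosh n (c * x)) * std_normal_density x) \<in> borel_measurable borel"
proof -
  have "(cosh :: real \<Rightarrow> real) \<in> borel_measurable borel"
    by (intro borel_measurable_continuous_onI continuous_intros)
  then show ?thesis
    unfolding scaled_ln_cosh_def by measurable
qed

definition hs_integral :: "real \<Rightarrow> nat \<Rightarrow> real" where
  "hs_integral c n = (\<integral>x. exp (scaled_ln_cosh n (c * x)) * std_normal_density x \<partial>lborel)"

lemma scaled_ln_cosh_integrand_le:
  "exp (scaled_ln_cosh n (c * x)) * std_normal_density x
    \<le> exp ((c * x)^2 / 2) * std_normal_density x"
  by (intro mult_right_mono exp_mono scaled_ln_cosh_le) simp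

lemma integrable_scaled_ln_cosh_integrand:
  assumes "c^2 < 1"
  shows "integrable lborel (\<lambda>x. exp (scaled_ln_cosh n (c * x)) * std_normal_density x)"
  by (rule Bochner_Integration.integrable_bound[OF gaussian_exp_square(1)[OF assms]])
    (simp_all add: borel_measurable_scaled_ln_cosh_integrand scaled_ln_cosh_integrand_le)

lemma hs_integral_0 [simp]: "hs_integral c 0 = 1"
  by (simp add: hs_integral_def scaled_ln_cosh_def)

lemma incseq_hs_integral:
  assumes "c^2 < 1"
  shows "incseq (hs_integral c)"
proof (rule incseq_SucI)
  fix n
  show "hs_integral c n \<le> hs_integral c (Suc n)"
    unfolding hs_integral_def
    using incseq_scaled_ln_cosh[THEN incseq_SucD]
    by (intro integral_mono integrable_scaled_ln_cosh_integrand assms mult_right_mono) simp_all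
qed

lemma hs_integral_pos:
  assumes "c^2 < 1"
  shows "0 < hs_integral c n"
proof -
  have "hs_integral c 0 \<le> hs_integral c n"
    using incseq_hs_integral[OF assms] by (rule incseqD) simp
  then show ?thesis
    by simp
qed

lemma hs_integral_tendsto:
  assumes "c^2 < 1"
  shows "hs_integral c \<longlonglongrightarrow> 1 / sqrt (1 - c^2)"
  unfolding hs_integral_def gaussian_exp_square(2)[OF assms, symmetric]
proof (rule integral_dominated_convergence)
  show "integrable lborel (\<lambda>x. exp ((c * x)^2 / 2) * std_normal_density x)"
    by (rule gaussian_exp_square(1)[OF assms])
  show "AE x in lborel. (\<lambda>n. exp (scaled_ln_cosh n (c * x)) * std_normal_density x)
      \<longlonglongrightarrow> exp ((c * x)^2 / 2) * std_normal_density x"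
    by (intro AE_I2 tendsto_intros scaled_ln_cosh_tendsto)
  show "AE x in lborel. norm (exp (scaled_ln_cosh n (c * x)) * std_normal_density x)
      \<le> exp ((c * x)^2 / 2) * std_normal_density x" for n
    by (simp add: scaled_ln_cosh_integrand_le)
qed (simp_all add: borel_measurable_scaled_ln_cosh_integrand)

lemma cw_G_eq_hs_integral:
  assumes "0 \<le> \<beta>" "\<beta> < 1" "0 < N"
  shows "cw_G N \<beta> = - \<beta> / 2 + ln (hs_integral (sqrt \<beta>) N)"
proof -
  have "(sqrt \<beta>)^2 < 1"
    using assms by simp
  then have "0 < hs_integral (sqrt \<beta>) N"
    by (rule hs_integral_pos)
  moreover have "cw_Z N \<beta> = exp (- \<beta> / 2) * 2 ^ N * hs_integral (sqrt \<beta>) N"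
    using cw_Z_Hubbard_Stratonovich[OF assms(1,3)]
    by (simp add: hs_integral_def cosh_power_eq_exp_scaled_ln_cosh mult.assoc)
  ultimately show ?thesis
    by (simp add: cw_G_def ln_mult ln_realpow)
qed

lemma sums_ln_series_tail:
  fixes \<beta> :: real
  assumes "\<bar>\<beta>\<bar> < 1"
  shows "(\<lambda>k. \<beta> ^ (k + 2) / (2 * real (k + 2))) sums (- \<beta> / 2 - ln (sqrt (1 - \<beta>)))"
proof -
  have "(\<lambda>n. \<beta> ^ n / real n) sums (- ln (1 - \<beta>))"
    using sums_minus[OF ln_series'[of "- \<beta>"]] assms by simp
  then have "(\<lambda>k. \<beta> ^ (k + 2) / real (k + 2)) sums (- ln (1 - \<beta>) - (\<Sum>n<2. \<beta> ^ n / real n))"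
    by (subst sums_iff_shift[where f = "\<lambda>n. \<beta> ^ n / real n"]) simp
  then have "(\<lambda>k. \<beta> ^ (k + 2) / real (k + 2)) sums (- ln (1 - \<beta>) - \<beta>)"
    by (simp add: eval_nat_numeral)
  then have "(\<lambda>k. \<beta> ^ (k + 2) / real (k + 2) / 2) sums ((- ln (1 - \<beta>) - \<beta>) / 2)"
    by (rule sums_divide)
  moreover have "(\<lambda>k. \<beta> ^ (k + 2) / real (k + 2) / 2) = (\<lambda>k. \<beta> ^ (k + 2) / (2 * real (k + 2)))"
    by (simp add: fun_eq_iff)
  moreover have "(- ln (1 - \<beta>) - \<beta>) / 2 = - \<beta> / 2 - ln (sqrt (1 - \<beta>))"
    using assms by (simp add: ln_sqrt diff_divide_distrib)
  ultimately show ?thesis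
    by (simp only:)
qed

theorem proposition2p3:
  fixes \<beta> :: real
  assumes "0 \<le> \<beta>" and "\<beta> < 1"
  shows "(\<forall>N. ln (cw_Z N \<beta>) = real N * ln 2 + cw_G N \<beta>)
    \<and> (\<forall>N\<ge>1. cw_G N \<beta> \<le> cw_G (Suc N) \<beta>)
    \<and> summable (\<lambda>k. \<beta> ^ (k + 2) / (2 * real (k + 2)))
    \<and> (\<lambda>N. cw_G N \<beta>) \<longlonglongrightarrow> (\<Sum>k. \<beta> ^ (k + 2) / (2 * real (k + 2)))
    \<and> (\<Sum>k. \<beta> ^ (k + 2) / (2 * real (k + 2))) = - \<beta> / 2 - ln (sqrt (1 - \<beta>))"
proof -
  define I where "I = hs_integral (sqrt \<beta>)"
  have c: "(sqrt \<beta>)^2 < 1"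
    using assms by simp
  have G: "cw_G N \<beta> = - \<beta> / 2 + ln (I N)" if "N \<ge> 1" for N
    using cw_G_eq_hs_integral assms that by (simp add: I_def)
  have mono: "cw_G N \<beta> \<le> cw_G (Suc N) \<beta>" if "N \<ge> 1" for N
    using incseq_SucD[OF incseq_hs_integral[OF c]] hs_integral_pos[OF c] that
    by (simp add: G I_def)
  have "(\<lambda>N. - \<beta> / 2 + ln (I N)) \<longlonglongrightarrow> - \<beta> / 2 + ln (1 / sqrt (1 - \<beta>))"
    using hs_integral_tendsto[OF c] assms by (intro tendsto_intros) (simp_all add: I_def)
  moreover have "\<forall>\<^sub>F N in sequentially. - \<beta> / 2 + ln (I N) = cw_G N \<beta>"
    using eventually_ge_at_top[of 1] by eventually_elim (simp add: G)
  ultimately have "(\<lambda>N. cw_G N \<beta>) \<longlonglongrightarrow> - \<beta> / 2 + ln (1 / sqrt (1 - \<beta>))"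
    by (rule Lim_transform_eventually)
  moreover have "ln (1 / sqrt (1 - \<beta>)) = - ln (sqrt (1 - \<beta>))"
    using assms by (simp add: ln_div)
  moreover have "(\<lambda>k. \<beta> ^ (k + 2) / (2 * real (k + 2))) sums (- \<beta> / 2 - ln (sqrt (1 - \<beta>)))"
    using assms by (intro sums_ln_series_tail) simp
  ultimately show ?thesis
    using mono by (simp add: cw_G_def sums_iff)
qed

end
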